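(* Under the setting described in the context, let $m^*$ be a Nash equilibrium. Then for every $i\in\mathcal N$ and $j\in\mathcal R_i$, ${}^i\pi^*_j\big({}^ia^*_j-{}^{i^+}a^*_j\big)^2=0$ and ${}^{i^+}\pi^*_j\big({}^{i^+}a^*_j-{}^{i^{++}}a^*_j\big)^2=0$ (where $m^*_k=({}^ka^*_{\mathcal R_k},{}^k\pi^*_{\mathcal R_k})$). Consequently, for every $i\in\mathcal N$, $\hat t_i(m^* )=\sum_{j\in\mathcal R_i}l_{ij}(m^* )\,\hat a_j(m^* )$.
   Context: Let $N\ge 1$ and $\mathcal N=\{1,\dots,N\}$. For each $i\in\mathcal N$ a set $\mathcal R_i\subseteq\mathcal N$ with $i\in\mathcal R_i$ is given; for $j\in\mathcal N$ put $\mathcal C_j=\{k\in\mathcal N: j\in\mathcal R_k\}$, and assume $|\mathcal C_j|\ge 3$ for all $j$. Each $\mathcal A_i\subset\mathbb R$ is a nonempty convex compact set with $0\in\mathcal A_i$. For each $i$, $u_i:\mathbb R^{\mathcal R_i}\to\mathbb R\cup\{-\infty\}$ is concave, real-valued whenever $a_i\in\mathcal A_i$, and $-\infty$ whenever $a_i\notin\mathcal A_i$. Aggregate utility: $u_i^A(a_{\mathcal R_i},t_i)=-t_i+u_i(a_{\mathcal R_i})$ if $a_i\in\mathcal A_i$, else $-\infty$. Game form: message $m_i=({}^ia_{\mathcal R_i},{}^i\pi_{\mathcal R_i})\in\mathcal M_i=\mathbb R^{\mathcal R_i}\times\mathbb R_+^{\mathcal R_i}$; $\hat a_i(m)=\frac1{|\mathcal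 C_i|}\sum_{k\in\mathcal C_i}{}^ka_i$. For each $j$ fix a bijection $\mathcal I_{\cdot j}:\mathcal C_j\to\{1,\dots,|\mathcal C_j|\}$, write $\mathcal C_{j(k)}$ for the user with index $k$ in $\mathcal C_j$, indices cyclic modulo $|\mathcal C_j|$. For $i\in\mathcal N$, $j\in\mathcal R_i$ let $i^+=\mathcal C_{j(\mathcal I_{ij}+1)}$, $i^{++}=\mathcal C_{j(\mathcal I_{ij}+2)}$, $l_{ij}(m)={}^{i^+}\pi_j-{}^{i^{++}}\pi_j$, and $\hat t_i(m)=\sum_{j\in\mathcal R_i}\Big[l_{ij}(m)\hat a_j(m)+{}^i\pi_j({}^ia_j-{}^{i^+}a_j)^2-{}^{i^+}\pi_j({}^{i^+}a_j-{}^{i^{++}}a_j)^2\Big]$. A Nash equilibrium is $m^*$ such that for all $i$ and $m_i\in\mathcal M_i$, $u_i^A\big((\hat a_j(m^* ))_{j\in\mathcal R_i},\hat t_i(m^* )\big)\ge u_i^A\big((\hat a_j(m_i,m^*_{-i}))_{j\in\mathcal R_i},\hat t_i(m_i,m^*_{-i})\big)$. *)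

theory Defs
  imports "HOL-Analysis.Analysis"
begin

text \<open>Users are 1..N. A message profile m is a pair (ma, mp) where
  ma k j = the proposed action of user k for user j and
  mp k j = the price announced by user k for user j (only j in R k matters).\<close>

definition Cset :: "nat \<Rightarrow> (nat \<Rightarrow> nat set) \<Rightarrow> nat \<Rightarrow> nat set" where
  "Cset N R j = {k \<in> {1..N}. j \<in> R k}"

definition ahat :: "nat \<Rightarrow> (nat \<Rightarrow> nat set) \<Rightarrow> (nat \<Rightarrow> nat \<Rightarrow> real) \<Rightarrow> nat \<Rightarrow> real" where
  "ahat N R ma j = (\<Sum>k\<in>Cset N R j. ma k j) / real (card (Cset N R j))"

definition cyc :: "nat \<Rightarrow> nat \<Rightarrow> nat" where
  "cyc n k = (k - 1) mod n + 1"

text \<open>C_{j(k)}: the user with index k (cyclically) in C_j\<close>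
definition member_at :: "nat \<Rightarrow> (nat \<Rightarrow> nat set) \<Rightarrow> (nat \<Rightarrow> nat \<Rightarrow> nat) \<Rightarrow> nat \<Rightarrow> nat \<Rightarrow> nat" where
  "member_at N R I j k = (THE i. i \<in> Cset N R j \<and> I i j = cyc (card (Cset N R j)) k)"

definition nxt :: "nat \<Rightarrow> (nat \<Rightarrow> nat set) \<Rightarrow> (nat \<Rightarrow> nat \<Rightarrow> nat) \<Rightarrow> nat \<Rightarrow> nat \<Rightarrow> nat" where
  "nxt N R I i j = member_at N R I j (I i j + 1)"

definition nxt2 :: "nat \<Rightarrow> (nat \<Rightarrow> nat set) \<Rightarrow> (nat \<Rightarrow> nat \<Rightarrow> nat) \<Rightarrow> nat \<Rightarrow> nat \<Rightarrow> nat" where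
  "nxt2 N R I i j = member_at N R I j (I i j + 2)"

definition lij :: "nat \<Rightarrow> (nat \<Rightarrow> nat set) \<Rightarrow> (nat \<Rightarrow> nat \<Rightarrow> nat) \<Rightarrow> (nat \<Rightarrow> nat \<Rightarrow> real) \<Rightarrow> nat \<Rightarrow> nat \<Rightarrow> real" where
  "lij N R I mp i j = mp (nxt N R I i j) j - mp (nxt2 N R I i j) j"

definition that :: "nat \<Rightarrow> (nat \<Rightarrow> nat set) \<Rightarrow> (nat \<Rightarrow> nat \<Rightarrow> nat) \<Rightarrow> (nat \<Rightarrow> nat \<Rightarrow> real) \<Rightarrow> (nat \<Rightarrow> nat \<Rightarrow> real) \<Rightarrow> nat \<Rightarrow> real" where
  "that N R I ma mp i =
     (\<Sum>j\<in>R i. lij N R I mp i j * ahat N R ma j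
        + mp i j * (ma i j - ma (nxt N R I i j) j)^2
        - mp (nxt N R I i j) j * (ma (nxt N R I i j) j - ma (nxt2 N R I i j) j)^2)"

definition uA :: "(nat \<Rightarrow> real set) \<Rightarrow> (nat \<Rightarrow> (nat \<Rightarrow> real) \<Rightarrow> real) \<Rightarrow> nat \<Rightarrow> (nat \<Rightarrow> real) \<Rightarrow> real \<Rightarrow> ereal" where
  "uA A u i a t = (if a i \<in> A i then ereal (- t + u i a) else -\<infinity>)"

definition concave_fun_on :: "(nat \<Rightarrow> real) set \<Rightarrow> ((nat \<Rightarrow> real) \<Rightarrow> real) \<Rightarrow> bool" where
  "concave_fun_on D f = (\<forall>x\<in>D. \<forall>y\<in>D. \<forall>\<theta>::real. 0 \<le> \<theta> \<and> \<theta> \<le> 1 \<longrightarrow>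
      \<theta> * f x + (1 - \<theta>) * f y \<le> f (\<lambda>k. \<theta> * x k + (1 - \<theta>) * y k))"

definition msg_ok :: "(nat \<Rightarrow> nat set) \<Rightarrow> nat \<Rightarrow> (nat \<Rightarrow> real) \<Rightarrow> bool" where
  "msg_ok R i p = (\<forall>j\<in>R i. 0 \<le> p j)"

definition is_NE :: "nat \<Rightarrow> (nat \<Rightarrow> nat set) \<Rightarrow> (nat \<Rightarrow> nat \<Rightarrow> nat) \<Rightarrow> (nat \<Rightarrow> real set)
    \<Rightarrow> (nat \<Rightarrow> (nat \<Rightarrow> real) \<Rightarrow> real) \<Rightarrow> (nat \<Rightarrow> nat \<Rightarrow> real) \<Rightarrow> (nat \<Rightarrow> nat \<Rightarrow> real) \<Rightarrow> bool" where
  "is_NE N R I A u ma mp =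
     ((\<forall>k\<in>{1..N}. msg_ok R k (mp k)) \<and>
      (\<forall>i\<in>{1..N}. \<forall>a' p'. msg_ok R i p' \<longrightarrow>
         uA A u i (ahat N R (ma(i := a'))) (that N R I (ma(i := a')) (mp(i := p')) i)
           \<le> uA A u i (ahat N R ma) (that N R I ma mp i)))"

end

theory Submission imports Defs begin

(* Fix a Nash equilibrium (ma, mp) and a user i.
   (1) The allocation ahat i is feasible for user i: otherwise user i gets
       utility -infinity, while by shifting only its own proposal for itself it
       can move ahat i to 0, which lies in A i, and obtain a finite utility.
   (2) Along the cyclic order of C_j the successors i+ and i++ of i differ from
       i (because |C_j| >= 3), so the only prices in t_i that user i controls
       are its own prices pi_ij, which occur exactly in the nonnegative penalty
       terms pi_ij (a_ij - a_i+j)^2.  Announcing price 0 everywhere lowers t_i by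
       the sum of these terms and leaves the allocation unchanged; since the
       allocation is feasible, optimality forces this sum, hence every term, to 0.
   (3) The second penalty term of t_i is the first penalty term of t_(i+),
       because (i+)+ = i++; so it vanishes by (2) applied to i+. *)

lemma cyc_range: "c > 0 \<Longrightarrow> cyc c k \<in> {1..c}"
  unfolding cyc_def by (auto simp: Suc_leI)

lemma cyc_succ_ne:
  assumes "c \<ge> 2" and "x \<in> {1..c}"
  shows "cyc c (x + 1) \<noteq> x"
proof -
  have "cyc c (x + 1) = x mod c + 1" unfolding cyc_def by simp
  then show ?thesis using assms by (cases "x = c") auto
qed

lemma cyc_succ2_ne:
  assumes c: "c \<ge> 3" and x: "x \<in> {1..c}"
  shows "cyc c (x + 2) \<noteq> x"
proof -
  have e: "cyc c (x + 2) = (x + 1) mod c + 1" unfolding cyc_def by simp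
  consider "x + 1 < c" | "x + 1 = c" | "x = c" using x by force
  then show ?thesis
  proof cases
    case 3
    have "(c + 1) mod c = 1" using c by (simp add: mod_Suc)
    then show ?thesis using e 3 c by simp
  qed (use e c in auto)
qed

lemma cyc_cyc_succ: "k \<ge> 1 \<Longrightarrow> cyc c (cyc c k + 1) = cyc c (k + 1)"
  unfolding cyc_def by (simp add: mod_Suc_eq)

lemma member_at_spec:
  assumes b: "bij_betw (\<lambda>i. I i j) (Cset N R j) {1..card (Cset N R j)}"
    and c: "card (Cset N R j) > 0"
  shows "member_at N R I j k \<in> Cset N R j
       \<and> I (member_at N R I j k) j = cyc (card (Cset N R j)) k"
proof -
  let ?c = "card (Cset N R j)"
  have "cyc ?c k \<in> (\<lambda>i. I i j) ` Cset N R j"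
    using b cyc_range[OF c] by (simp add: bij_betw_def)
  then obtain i where i: "i \<in> Cset N R j" "I i j = cyc ?c k" by (auto elim!: imageE)
  have inj: "inj_on (\<lambda>i. I i j) (Cset N R j)" using b by (simp add: bij_betw_def)
  have "(THE x. x \<in> Cset N R j \<and> I x j = cyc ?c k) = i"
    using i inj_onD[OF inj] by (intro the_equality) auto
  then show ?thesis unfolding member_at_def using i by simp
qed

lemma nxt_ring:
  assumes c3: "card (Cset N R j) \<ge> 3"
    and b: "bij_betw (\<lambda>i. I i j) (Cset N R j) {1..card (Cset N R j)}"
    and iC: "i \<in> Cset N R j"
  shows "nxt N R I i j \<in> Cset N R j" and "nxt N R I i j \<noteq> i"
    and "nxt2 N R I i j \<noteq> i" and "nxt N R I (nxt N R I i j) j = nxt2 N R I i j"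
proof -
  let ?c = "card (Cset N R j)"
  have Ii: "I i j \<in> {1..?c}" using b iC unfolding bij_betw_def by auto
  have spec: "member_at N R I j k \<in> Cset N R j \<and> I (member_at N R I j k) j = cyc ?c k" for k
    using member_at_spec[of I j N R, OF b] c3 by simp
  have succ: "nxt N R I i j \<in> Cset N R j \<and> I (nxt N R I i j) j = cyc ?c (I i j + 1)"
    using spec unfolding nxt_def by blast
  have succ2: "I (nxt2 N R I i j) j = cyc ?c (I i j + 2)"
    using spec unfolding nxt2_def by blast
  show "nxt N R I i j \<in> Cset N R j" using succ by blast
  show "nxt N R I i j \<noteq> i"
  proof
    assume "nxt N R I i j = i"
    then show False using succ cyc_succ_ne[OF _ Ii] c3 by simp
  qed
  show "nxt2 N R I i j \<noteq> i"
  proof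
    assume "nxt2 N R I i j = i"
    then show False using succ2 cyc_succ2_ne[OF c3 Ii] by simp
  qed
  have "nxt N R I (nxt N R I i j) j = member_at N R I j (cyc ?c (I i j + 1) + 1)"
    using spec unfolding nxt_def by simp
  also have "\<dots> = member_at N R I j (I i j + 2)"
    unfolding member_at_def using cyc_cyc_succ[of "I i j + 1" ?c] by (simp add: numeral_2_eq_2)
  finally show "nxt N R I (nxt N R I i j) j = nxt2 N R I i j" unfolding nxt2_def .
qed

lemma ahat_update:
  assumes iC: "i \<in> Cset N R j"
  shows "ahat N R (ma(i := (ma i)(j := x))) j
       = ahat N R ma j + (x - ma i j) / real (card (Cset N R j))"
proof -
  let ?C = "Cset N R j" and ?ma' = "ma(i := (ma i)(j := x))"
  have fin: "finite ?C" unfolding Cset_def by simp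
  have rest: "(\<Sum>k\<in>?C - {i}. ?ma' k j) = (\<Sum>k\<in>?C - {i}. ma k j)"
    by (rule sum.cong) auto
  have "(\<Sum>k\<in>?C. ?ma' k j) = x + (\<Sum>k\<in>?C - {i}. ma k j)"
    using sum.remove[OF fin iC, of "\<lambda>k. ?ma' k j"] rest by simp
  also have "\<dots> = (\<Sum>k\<in>?C. ma k j) + (x - ma i j)"
    using sum.remove[OF fin iC, of "\<lambda>k. ma k j"] by simp
  finally show ?thesis unfolding ahat_def by (simp add: add_divide_distrib)
qed

lemma that_zero_own_prices:
  assumes "\<forall>j\<in>R i. nxt N R I i j \<noteq> i \<and> nxt2 N R I i j \<noteq> i"
  shows "that N R I ma (mp(i := (\<lambda>j. 0))) i
       = that N R I ma mp i - (\<Sum>j\<in>R i. mp i j * (ma i j - ma (nxt N R I i j) j)^2)"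
proof -
  let ?rest = "\<lambda>j. lij N R I mp i j * ahat N R ma j
        - mp (nxt N R I i j) j * (ma (nxt N R I i j) j - ma (nxt2 N R I i j) j)^2"
  let ?pen = "\<lambda>j. mp i j * (ma i j - ma (nxt N R I i j) j)^2"
  have "that N R I ma (mp(i := (\<lambda>j. 0))) i = (\<Sum>j\<in>R i. ?rest j)"
    unfolding that_def lij_def using assms by (intro sum.cong) auto
  moreover have "that N R I ma mp i = (\<Sum>j\<in>R i. ?rest j + ?pen j)"
    unfolding that_def by (intro sum.cong) simp_all
  ultimately show ?thesis by (simp add: sum.distrib)
qed

lemma that_without_penalties:
  assumes "\<forall>j\<in>R i. mp i j * (ma i j - ma (nxt N R I i j) j)^2 = 0 \<and>
      mp (nxt N R I i j) j * (ma (nxt N R I i j) j - ma (nxt2 N R I i j) j)^2 = 0"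
  shows "that N R I ma mp i = (\<Sum>j\<in>R i. lij N R I mp i j * ahat N R ma j)"
  unfolding that_def
proof (rule sum.cong[OF refl])
  fix j assume "j \<in> R i"
  with assms show "lij N R I mp i j * ahat N R ma j
      + mp i j * (ma i j - ma (nxt N R I i j) j)^2
      - mp (nxt N R I i j) j * (ma (nxt N R I i j) j - ma (nxt2 N R I i j) j)^2
    = lij N R I mp i j * ahat N R ma j" by (simp only: add_0_right diff_zero)
qed

lemma NE_prices_nonneg:
  "is_NE N R I A u ma mp \<Longrightarrow> i \<in> {1..N} \<Longrightarrow> j \<in> R i \<Longrightarrow> 0 \<le> mp i j"
  unfolding is_NE_def msg_ok_def by blast

lemma NE_no_deviation:
  assumes "is_NE N R I A u ma mp" and "i \<in> {1..N}" and "msg_ok R i p'"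
  shows "uA A u i (ahat N R (ma(i := a'))) (that N R I (ma(i := a')) (mp(i := p')) i)
           \<le> uA A u i (ahat N R ma) (that N R I ma mp i)"
  using assms unfolding is_NE_def by blast

lemma NE_feasible:
  assumes NE: "is_NE N R I A u ma mp"
    and i: "i \<in> {1..N}" and iC: "i \<in> Cset N R i" and zero: "0 \<in> A i"
  shows "ahat N R ma i \<in> A i"
proof (rule ccontr)
  assume infeasible: "ahat N R ma i \<notin> A i"
  let ?c = "real (card (Cset N R i))"
  define a' where "a' = (ma i)(i := ma i i - ?c * ahat N R ma i)"
  have "?c > 0" using iC unfolding Cset_def by (auto simp: card_gt_0_iff)
  then have "ahat N R (ma(i := a')) i = 0"
    unfolding a'_def using ahat_update[OF iC] by simp
  then have "uA A u i (ahat N R (ma(i := a'))) (that N R I (ma(i := a')) (mp(i := mp i)) i) \<noteq> -\<infinity>"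
    using zero unfolding uA_def by simp
  moreover have "uA A u i (ahat N R ma) (that N R I ma mp i) = -\<infinity>"
    using infeasible unfolding uA_def by simp
  moreover have "msg_ok R i (mp i)"
    using NE_prices_nonneg[OF NE i] unfolding msg_ok_def by blast
  ultimately show False using NE_no_deviation[OF NE i, of "mp i" a'] by simp
qed

text \<open>At an equilibrium with feasible allocation, user i's own penalty terms
  vanish: announcing zero prices would otherwise strictly reduce its tax.\<close>
lemma NE_own_penalty_zero:
  assumes NE: "is_NE N R I A u ma mp"
    and i: "i \<in> {1..N}" and fin: "finite (R i)" and feas: "ahat N R ma i \<in> A i"
    and ring: "\<forall>j\<in>R i. nxt N R I i j \<noteq> i \<and> nxt2 N R I i j \<noteq> i"
    and j: "j \<in> R i"
  shows "mp i j * (ma i j - ma (nxt N R I i j) j)^2 = 0"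
proof -
  let ?pen = "\<lambda>j. mp i j * (ma i j - ma (nxt N R I i j) j)^2"
  have nonneg: "\<forall>j\<in>R i. ?pen j \<ge> 0"
  proof
    fix j assume "j \<in> R i"
    then have "0 \<le> mp i j" by (rule NE_prices_nonneg[OF NE i])
    then show "?pen j \<ge> 0" by simp
  qed
  have "msg_ok R i (\<lambda>j. 0)" by (simp add: msg_ok_def)
  from NE_no_deviation[OF NE i this, of "ma i"]
  have "uA A u i (ahat N R ma) (that N R I ma (mp(i := (\<lambda>j. 0))) i)
          \<le> uA A u i (ahat N R ma) (that N R I ma mp i)"
    by (simp only: fun_upd_triv)
  then have "(\<Sum>j\<in>R i. ?pen j) \<le> 0"
    unfolding that_zero_own_prices[OF ring] uA_def using feas by simp
  moreover have "(\<Sum>j\<in>R i. ?pen j) \<ge> 0" using nonneg by (simp add: sum_nonneg)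
  ultimately have "(\<Sum>j\<in>R i. ?pen j) = 0" by linarith
  then have "\<forall>j\<in>R i. ?pen j = 0" using sum_nonneg_eq_0_iff[OF fin, of ?pen] nonneg by blast
  then show ?thesis using j by blast
qed

theorem claim2:
  fixes N :: nat and R :: "nat \<Rightarrow> nat set" and I :: "nat \<Rightarrow> nat \<Rightarrow> nat"
    and A :: "nat \<Rightarrow> real set" and u :: "nat \<Rightarrow> (nat \<Rightarrow> real) \<Rightarrow> real"
    and ma mp :: "nat \<Rightarrow> nat \<Rightarrow> real"
  assumes "N \<ge> 1"
    and "\<forall>i\<in>{1..N}. R i \<subseteq> {1..N} \<and> i \<in> R i"
    and "\<forall>j\<in>{1..N}. card (Cset N R j) \<ge> 3"
    and "\<forall>j\<in>{1..N}. bij_betw (\<lambda>i. I i j) (Cset N R j) {1..card (Cset N R j)}"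
    and "\<forall>i\<in>{1..N}. convex (A i) \<and> compact (A i) \<and> A i \<noteq> {} \<and> 0 \<in> A i"
    and "\<forall>i\<in>{1..N}. \<forall>a b. (\<forall>j\<in>R i. a j = b j) \<longrightarrow> u i a = u i b"
    and "\<forall>i\<in>{1..N}. concave_fun_on {a. a i \<in> A i} (u i)"
    and "is_NE N R I A u ma mp"
  shows "(\<forall>i\<in>{1..N}. \<forall>j\<in>R i.
            mp i j * (ma i j - ma (nxt N R I i j) j)^2 = 0 \<and>
            mp (nxt N R I i j) j * (ma (nxt N R I i j) j - ma (nxt2 N R I i j) j)^2 = 0)
       \<and> (\<forall>i\<in>{1..N}. that N R I ma mp i = (\<Sum>j\<in>R i. lij N R I mp i j * ahat N R ma j))"
proof -
  have ring: "nxt N R I i j \<in> Cset N R j \<and> nxt N R I i j \<noteq> i \<and> nxt2 N R I i j \<noteq> i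
      \<and> nxt N R I (nxt N R I i j) j = nxt2 N R I i j" if "i \<in> {1..N}" "j \<in> R i" for i j
    using nxt_ring[of N R j I i] assms(2-4) that unfolding Cset_def by blast
  have own: "mp i j * (ma i j - ma (nxt N R I i j) j)^2 = 0"
    if i: "i \<in> {1..N}" and j: "j \<in> R i" for i j
  proof (rule NE_own_penalty_zero[OF assms(8) i _ _ _ j])
    show "finite (R i)" using assms(2) i finite_subset by blast
    show "ahat N R ma i \<in> A i"
      using NE_feasible[OF assms(8) i] assms(2,5) i unfolding Cset_def by blast
    show "\<forall>j\<in>R i. nxt N R I i j \<noteq> i \<and> nxt2 N R I i j \<noteq> i" using ring i by blast
  qed
  have penalties: "mp i j * (ma i j - ma (nxt N R I i j) j)^2 = 0 \<and>
      mp (nxt N R I i j) j * (ma (nxt N R I i j) j - ma (nxt2 N R I i j) j)^2 = 0"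
    if "i \<in> {1..N}" "j \<in> R i" for i j
    using own[of i j] own[of "nxt N R I i j" j] ring[OF that] that unfolding Cset_def by auto
  then show ?thesis using that_without_penalties by blast
qed

end
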